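(* Let $m,n \geq 2$ be integers with $(m,n) \neq (2,2)$. Then $2$ is the unique typical subrank of real tensors in $\mathbb{R}^2 \otimes \mathbb{R}^m \otimes \mathbb{R}^n$.
   Context: For $r \geq 0$ let $I_r := \sum_{j=1}^r e_j \otimes e_j \otimes e_j$. The subrank of $T \in \mathbb{R}^{n_1} \otimes \mathbb{R}^{n_2} \otimes \mathbb{R}^{n_3}$ is $Q(T) := \max\{ r \mid \exists\ \mathbb{R}\text{-linear } \varphi_i : \mathbb{R}^{n_i} \to \mathbb{R}^r,\ (\varphi_1 \otimes \varphi_2 \otimes \varphi_3) T = I_r\}$. An integer $r$ is a typical subrank of the format $n_1\times n_2\times n_3$ if $\{T \mid Q(T) = r\}$ contains a nonempty Euclidean-open subset of $\mathbb{R}^{n_1} \otimes \mathbb{R}^{n_2} \otimes \mathbb{R}^{n_3}$. *)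

theory Defs
  imports "HOL-Analysis.Analysis"
begin

text \<open>Real tensors in R^n1 (x) R^n2 (x) R^n3 are represented as functions
  nat \<Rightarrow> nat \<Rightarrow> nat \<Rightarrow> real (0-based coordinates) that vanish outside
  the box {0..<n1} x {0..<n2} x {0..<n3}.\<close>

definition tensor_space :: "nat \<Rightarrow> nat \<Rightarrow> nat \<Rightarrow> (nat \<Rightarrow> nat \<Rightarrow> nat \<Rightarrow> real) set" where
  "tensor_space n1 n2 n3 =
     {T. \<forall>i j k. \<not> (i < n1 \<and> j < n2 \<and> k < n3) \<longrightarrow> T i j k = 0}"

text \<open>A linear map R^n \<rightarrow> R^r is given by an r x n matrix A (entries A a i,
  a < r, i < n). The image of T under phi1 (x) phi2 (x) phi3.\<close>

definition tensor_apply ::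
  "nat \<Rightarrow> nat \<Rightarrow> nat \<Rightarrow> (nat \<Rightarrow> nat \<Rightarrow> real) \<Rightarrow> (nat \<Rightarrow> nat \<Rightarrow> real) \<Rightarrow> (nat \<Rightarrow> nat \<Rightarrow> real)
     \<Rightarrow> (nat \<Rightarrow> nat \<Rightarrow> nat \<Rightarrow> real) \<Rightarrow> nat \<Rightarrow> nat \<Rightarrow> nat \<Rightarrow> real" where
  "tensor_apply n1 n2 n3 A B C T a b c =
     (\<Sum>i<n1. \<Sum>j<n2. \<Sum>k<n3. A a i * B b j * C c k * T i j k)"

text \<open>Unit tensor I_r = sum_{j<r} e_j (x) e_j (x) e_j, as a function on {0..<r}^3.\<close>

definition unit_tensor :: "nat \<Rightarrow> nat \<Rightarrow> nat \<Rightarrow> real" where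
  "unit_tensor a b c = (if a = b \<and> b = c then 1 else 0)"

definition restricts_to_unit :: "nat \<Rightarrow> nat \<Rightarrow> nat \<Rightarrow> (nat \<Rightarrow> nat \<Rightarrow> nat \<Rightarrow> real) \<Rightarrow> nat \<Rightarrow> bool" where
  "restricts_to_unit n1 n2 n3 T r \<longleftrightarrow>
     (\<exists>A B C. \<forall>a<r. \<forall>b<r. \<forall>c<r.
        tensor_apply n1 n2 n3 A B C T a b c = unit_tensor a b c)"

definition subrank :: "nat \<Rightarrow> nat \<Rightarrow> nat \<Rightarrow> (nat \<Rightarrow> nat \<Rightarrow> nat \<Rightarrow> real) \<Rightarrow> nat" where
  "subrank n1 n2 n3 T = (GREATEST r. restricts_to_unit n1 n2 n3 T r)"

text \<open>Euclidean-open subsets of the tensor space (all norms on a finite-dimensional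
  space are equivalent; we use the max-norm over coordinates).\<close>

definition tensor_open :: "nat \<Rightarrow> nat \<Rightarrow> nat \<Rightarrow> (nat \<Rightarrow> nat \<Rightarrow> nat \<Rightarrow> real) set \<Rightarrow> bool" where
  "tensor_open n1 n2 n3 U \<longleftrightarrow> U \<subseteq> tensor_space n1 n2 n3 \<and>
     (\<forall>T\<in>U. \<exists>e>0. \<forall>S\<in>tensor_space n1 n2 n3.
        (\<forall>i<n1. \<forall>j<n2. \<forall>k<n3. \<bar>S i j k - T i j k\<bar> < e) \<longrightarrow> S \<in> U)"

definition typical_subrank :: "nat \<Rightarrow> nat \<Rightarrow> nat \<Rightarrow> nat \<Rightarrow> bool" where
  "typical_subrank n1 n2 n3 r \<longleftrightarrow>
     (\<exists>U. U \<noteq> {} \<and> tensor_open n1 n2 n3 U \<and>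
          U \<subseteq> {T \<in> tensor_space n1 n2 n3. subrank n1 n2 n3 T = r})"

end

theory Submission
  imports Defs "HOL-Computational_Algebra.Polynomial"
begin

text \<open>Since the first factor is \<open>\<real>\<^sup>2\<close>, a restriction to \<open>I\<^sub>3\<close> would write the \<open>3 \<times> 3\<close>
  identity matrix as a sum of two rank-one matrices, so the subrank is at most 2 everywhere.
  Conversely, let \<open>w\<^sub>0, w\<^sub>1 \<in> \<real>\<^sup>3\<close> be the cross products of the two rows of the upper-left
  \<open>2 \<times> 3\<close> corners of the slices \<open>T\<^sub>0, T\<^sub>1\<close>. Contracting the third factor with \<open>w\<^sub>1\<close>
  annihilates the corner of \<open>T\<^sub>1\<close> and leaves a vector \<open>p \<in> \<real>\<^sup>2\<close> from \<open>T\<^sub>0\<close>; symmetrically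
  \<open>w\<^sub>0\<close> yields \<open>q\<close> from \<open>T\<^sub>1\<close>. Whenever \<open>det (p, q) \<noteq> 0\<close>, a change of basis in the second
  factor produces \<open>I\<^sub>2\<close>. This determinant is a polynomial in the entries of \<open>T\<close> which is
  nonzero at some tensor once \<open>n \<ge> 3\<close>, so its non-vanishing set is open and dense and 2 is the
  only typical subrank. The case \<open>n = 2\<close>, \<open>m \<ge> 3\<close> follows by swapping the last two factors.\<close>

definition swap23 :: "(nat \<Rightarrow> nat \<Rightarrow> nat \<Rightarrow> real) \<Rightarrow> nat \<Rightarrow> nat \<Rightarrow> nat \<Rightarrow> real" where
  "swap23 T = (\<lambda>i j k. T i k j)"

lemma swap23_swap23 [simp]: "swap23 (swap23 T) = T"
  by (simp add: swap23_def)

lemma swap23_in_tensor_space: "T \<in> tensor_space n1 n2 n3 \<Longrightarrow> swap23 T \<in> tensor_space n1 n3 n2"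
  by (auto simp: tensor_space_def swap23_def)

lemma tensor_apply_swap23:
  "tensor_apply n1 n3 n2 A C B (swap23 T) a c b = tensor_apply n1 n2 n3 A B C T a b c"
  unfolding tensor_apply_def swap23_def
  by (rule sum.cong[OF refl], subst sum.swap) (simp add: ac_simps)

lemma restricts_to_unit_swap23:
  assumes "restricts_to_unit n1 n2 n3 T r"
  shows "restricts_to_unit n1 n3 n2 (swap23 T) r"
proof -
  obtain A B C where "\<forall>a<r. \<forall>b<r. \<forall>c<r. tensor_apply n1 n2 n3 A B C T a b c = unit_tensor a b c"
    using assms unfolding restricts_to_unit_def by blast
  then have "\<forall>a<r. \<forall>c<r. \<forall>b<r. tensor_apply n1 n3 n2 A C B (swap23 T) a c b = unit_tensor a c b"
    by (auto simp: tensor_apply_swap23 unit_tensor_def)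
  then show ?thesis
    unfolding restricts_to_unit_def by blast
qed

lemma subrank_swap23: "subrank n1 n3 n2 (swap23 T) = subrank n1 n2 n3 T"
proof -
  have "restricts_to_unit n1 n3 n2 (swap23 T) = restricts_to_unit n1 n2 n3 T"
    using restricts_to_unit_swap23[of n1 n2 n3 T] restricts_to_unit_swap23[of n1 n3 n2 "swap23 T"]
    by auto
  then show ?thesis
    unfolding subrank_def by simp
qed

lemma tensor_open_swap23:
  assumes "tensor_open n1 n2 n3 U"
  shows "tensor_open n1 n3 n2 (swap23 ` U)"
  unfolding tensor_open_def
proof (intro conjI ballI)
  show "swap23 ` U \<subseteq> tensor_space n1 n3 n2"
    using assms swap23_in_tensor_space unfolding tensor_open_def by blast
next
  fix T assume "T \<in> swap23 ` U"
  then have "swap23 T \<in> U" by auto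
  then obtain e where "e > 0" and e: "\<forall>S\<in>tensor_space n1 n2 n3.
      (\<forall>i<n1. \<forall>j<n2. \<forall>k<n3. \<bar>S i j k - swap23 T i j k\<bar> < e) \<longrightarrow> S \<in> U"
    using assms unfolding tensor_open_def by blast
  have "S \<in> swap23 ` U"
    if "S \<in> tensor_space n1 n3 n2" "\<forall>i<n1. \<forall>j<n3. \<forall>k<n2. \<bar>S i j k - T i j k\<bar> < e" for S
  proof -
    have "swap23 S \<in> U"
      using e swap23_in_tensor_space[OF that(1)] that(2) by (auto simp: swap23_def)
    then show ?thesis
      by (metis image_eqI swap23_swap23)
  qed
  with \<open>e > 0\<close> show "\<exists>e>0. \<forall>S\<in>tensor_space n1 n3 n2.
      (\<forall>i<n1. \<forall>j<n3. \<forall>k<n2. \<bar>S i j k - T i j k\<bar> < e) \<longrightarrow> S \<in> swap23 ` U"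
    by blast
qed

lemma typical_subrank_swap23:
  assumes "typical_subrank n1 n2 n3 r"
  shows "typical_subrank n1 n3 n2 r"
proof -
  obtain U where "U \<noteq> {}" "tensor_open n1 n2 n3 U"
      and U: "U \<subseteq> {T \<in> tensor_space n1 n2 n3. subrank n1 n2 n3 T = r}"
    using assms unfolding typical_subrank_def by blast
  moreover have "swap23 ` U \<subseteq> {T \<in> tensor_space n1 n3 n2. subrank n1 n3 n2 T = r}"
    using U by (auto simp: swap23_in_tensor_space subrank_swap23)
  ultimately show ?thesis
    unfolding typical_subrank_def
    by (intro exI[of _ "swap23 ` U"] conjI tensor_open_swap23) auto
qed

lemma typical_subrank_swap23_iff:
  "typical_subrank n1 n3 n2 r \<longleftrightarrow> typical_subrank n1 n2 n3 r"
  using typical_subrank_swap23 by blast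

lemma det3_rank_two:
  fixes x y g h :: "nat \<Rightarrow> 'a::comm_ring_1"
  defines "M \<equiv> \<lambda>a b. x a * g b + y a * h b"
  shows "M 0 0 * (M 1 1 * M 2 2 - M 1 2 * M 2 1) - M 0 1 * (M 1 0 * M 2 2 - M 1 2 * M 2 0)
         + M 0 2 * (M 1 0 * M 2 1 - M 1 1 * M 2 0) = 0"
  unfolding M_def by (simp add: algebra_simps)

lemma restricts_to_unit_le_2:
  assumes "restricts_to_unit 2 n2 n3 T r"
  shows "r \<le> 2"
proof (rule ccontr)
  assume "\<not> r \<le> 2"
  moreover obtain A B C
    where "\<forall>a<r. \<forall>b<r. \<forall>c<r. tensor_apply 2 n2 n3 A B C T a b c = unit_tensor a b c"
    using assms unfolding restricts_to_unit_def by blast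
  ultimately have unit: "tensor_apply 2 n2 n3 A B C T a b b = (if a = b then 1 else 0)"
    if "a < 3" "b < 3" for a b
    using that by (auto simp: unit_tensor_def)
  define g where "g b = (\<Sum>j<n2. \<Sum>k<n3. B b j * C b k * T 0 j k)" for b
  define h where "h b = (\<Sum>j<n2. \<Sum>k<n3. B b j * C b k * T 1 j k)" for b
  define M where "M a b = tensor_apply 2 n2 n3 A B C T a b b" for a b
  have "M = (\<lambda>a b. A a 0 * g b + A a 1 * h b)"
    by (simp add: fun_eq_iff M_def tensor_apply_def g_def h_def numeral_2_eq_2
        sum_distrib_left mult.assoc)
  then have "M 0 0 * (M 1 1 * M 2 2 - M 1 2 * M 2 1) - M 0 1 * (M 1 0 * M 2 2 - M 1 2 * M 2 0)
      + M 0 2 * (M 1 0 * M 2 1 - M 1 1 * M 2 0) = 0"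
    using det3_rank_two by simp
  then show False
    by (simp add: M_def unit)
qed

lemma subrank_eq_2:
  assumes "restricts_to_unit 2 n2 n3 T 2"
  shows "subrank 2 n2 n3 T = 2"
  unfolding subrank_def using assms restricts_to_unit_le_2 by (intro Greatest_equality)

lemma tensor_apply_restrict:
  assumes "p2 \<le> n2" "p3 \<le> n3"
    and "\<And>b j. p2 \<le> j \<Longrightarrow> B b j = 0" and "\<And>c k. p3 \<le> k \<Longrightarrow> C c k = 0"
  shows "tensor_apply n1 n2 n3 A B C T = tensor_apply n1 p2 p3 A B C T"
proof -
  have restrict: "(\<Sum>j<n2. \<Sum>k<n3. f j k) = (\<Sum>j<p2. \<Sum>k<p3. f j k)"
    if "\<And>j k. p2 \<le> j \<or> p3 \<le> k \<Longrightarrow> f j k = 0" for f :: "nat \<Rightarrow> nat \<Rightarrow> real"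
  proof -
    have "(\<Sum>j<n2. \<Sum>k<n3. f j k) = (\<Sum>j<p2. \<Sum>k<n3. f j k)"
      using assms(1) that by (intro sum.mono_neutral_right) auto
    also have "\<dots> = (\<Sum>j<p2. \<Sum>k<p3. f j k)"
      using assms(2) that by (intro sum.cong refl sum.mono_neutral_right) auto
    finally show ?thesis .
  qed
  show ?thesis
    unfolding tensor_apply_def using assms(3,4)
    by (intro ext sum.cong[OF refl] restrict) auto
qed

lemma sum_lessThan_2: "(\<Sum>k<2. f k) = f 0 + f (1::nat)"
  by (simp add: numeral_2_eq_2)

lemma sum_lessThan_3: "(\<Sum>k<3. f k) = f 0 + f 1 + f (2::nat)"
  by (simp add: numeral_3_eq_3 numeral_2_eq_2)

definition slice_cross :: "(nat \<Rightarrow> nat \<Rightarrow> nat \<Rightarrow> 'a::comm_ring_1) \<Rightarrow> nat \<Rightarrow> nat \<Rightarrow> 'a" where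
  "slice_cross T i k =
     (if k = 0 then T i 0 1 * T i 1 2 - T i 0 2 * T i 1 1
      else if k = 1 then T i 0 2 * T i 1 0 - T i 0 0 * T i 1 2
      else T i 0 0 * T i 1 1 - T i 0 1 * T i 1 0)"

definition cross_pairing :: "(nat \<Rightarrow> nat \<Rightarrow> nat \<Rightarrow> 'a::comm_ring_1) \<Rightarrow> nat \<Rightarrow> nat \<Rightarrow> 'a" where
  "cross_pairing T i j = (\<Sum>k<3. T i j k * slice_cross T (1 - i) k)"

definition cross_det :: "(nat \<Rightarrow> nat \<Rightarrow> nat \<Rightarrow> 'a::comm_ring_1) \<Rightarrow> 'a" where
  "cross_det T = cross_pairing T 0 0 * cross_pairing T 1 1 - cross_pairing T 0 1 * cross_pairing T 1 0"

lemma slice_cross_orthogonal: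
  assumes "j < 2"
  shows "(\<Sum>k<3. T i j k * slice_cross T i k) = 0"
proof -
  have "j = 0 \<or> j = 1" using assms by auto
  then show ?thesis
    by (auto simp: sum_lessThan_3 slice_cross_def algebra_simps)
qed

lemma contract_slice_cross:
  assumes "i < 2" "c < 2" "j < 2"
  shows "(\<Sum>k<3. T i j k * slice_cross T (1 - c) k) = (if i = c then cross_pairing T i j else 0)"
proof (cases "i = c")
  case False
  with assms have "1 - c = i" by auto
  with False show ?thesis using slice_cross_orthogonal[OF assms(3)] by simp
qed (simp add: cross_pairing_def)

lemma restricts_to_unit_2_if_cross_det_nonzero:
  fixes T :: "nat \<Rightarrow> nat \<Rightarrow> nat \<Rightarrow> real"
  assumes "cross_det T \<noteq> 0" and "2 \<le> m" and "3 \<le> n"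
  shows "restricts_to_unit 2 m n T 2"
proof -
  define P where "P = cross_pairing T"
  define A :: "nat \<Rightarrow> nat \<Rightarrow> real" where "A a i = (if a = i then 1 else 0)" for a i
  define adj :: "nat \<Rightarrow> nat \<Rightarrow> real" where
    "adj b j = (if b = j then P (1 - b) (1 - j) else - P j b)" for b j
  define B :: "nat \<Rightarrow> nat \<Rightarrow> real" where "B b j = (if j < 2 then adj b j / cross_det T else 0)" for b j
  define C :: "nat \<Rightarrow> nat \<Rightarrow> real" where
    "C c k = (if k < 3 then slice_cross T (1 - c) k else 0)" for c k
  have adj_mult: "(\<Sum>j<2. adj b j * P a j) = (if a = b then cross_det T else 0)"
    if "a < 2" "b < 2" for a b
  proof -
    have "a = 0 \<or> a = 1" "b = 0 \<or> b = 1" using that by auto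
    then show ?thesis
      by (auto simp: sum_lessThan_2 adj_def P_def cross_det_def)
  qed
  have B_inverse: "(\<Sum>j<2. B b j * P a j) = (if a = b then 1 else 0)" if "a < 2" "b < 2" for a b
    using adj_mult[OF that] assms(1)
    by (simp add: B_def flip: sum_divide_distrib)
  have "tensor_apply 2 m n A B C T a b c = unit_tensor a b c" if "a < 2" "b < 2" "c < 2" for a b c
  proof -
    have "tensor_apply 2 m n A B C T a b c = tensor_apply 2 2 3 A B C T a b c"
      using assms(2,3) by (subst tensor_apply_restrict[of 2 m 3 n]) (auto simp: B_def C_def)
    also have "\<dots> = (\<Sum>j<2. \<Sum>k<3. B b j * C c k * T a j k)"
      using \<open>a < 2\<close> by (auto simp: tensor_apply_def A_def sum_lessThan_2 less_2_cases_iff)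
    also have "\<dots> = (\<Sum>j<2. B b j * (\<Sum>k<3. T a j k * slice_cross T (1 - c) k))"
      by (simp add: C_def sum_distrib_left mult_ac)
    also have "\<dots> = (if a = c then (\<Sum>j<2. B b j * P a j) else 0)"
      using that contract_slice_cross[of a c _ T] by (simp add: P_def)
    also have "\<dots> = unit_tensor a b c"
      using that by (simp add: B_inverse unit_tensor_def)
    finally show ?thesis .
  qed
  then show ?thesis
    unfolding restricts_to_unit_def by blast
qed

lemma cross_det_scale: "cross_det (\<lambda>i j k. c * T i j k) = c ^ 6 * cross_det T"
proof -
  have "slice_cross (\<lambda>i j k. c * T i j k) i k = c ^ 2 * slice_cross T i k" for i k
    by (simp add: slice_cross_def algebra_simps power2_eq_square)
  then have "cross_pairing (\<lambda>i j k. c * T i j k) i j = c ^ 3 * cross_pairing T i j" for i j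
    by (simp add: cross_pairing_def sum_distrib_left algebra_simps power2_eq_square power3_eq_cube)
  moreover have "(c ^ 6 :: 'a) = c ^ 3 * c ^ 3"
    by (simp flip: power_add)
  ultimately show ?thesis
    by (simp add: cross_det_def algebra_simps)
qed

lemma poly_slice_cross_linear:
  "poly (slice_cross (\<lambda>i j k. [:K i j k, T i j k:]) i k) u
     = slice_cross (\<lambda>i j k. K i j k + u * T i j k) i k"
  by (simp add: slice_cross_def algebra_simps)

lemma poly_cross_det_linear:
  "poly (cross_det (\<lambda>i j k. [:K i j k, T i j k:])) u = cross_det (\<lambda>i j k. K i j k + u * T i j k)"
  by (simp only: cross_det_def cross_pairing_def poly_diff poly_mult poly_sum poly_pCons poly_0
      poly_slice_cross_linear mult_zero_right add_0_right)

lemma cross_det_tendsto: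
  fixes S :: "'b \<Rightarrow> nat \<Rightarrow> nat \<Rightarrow> nat \<Rightarrow> real"
  assumes "\<And>i j k. i < 2 \<Longrightarrow> j < 2 \<Longrightarrow> k < 3 \<Longrightarrow> ((\<lambda>x. S x i j k) \<longlongrightarrow> T i j k) F"
  shows "((\<lambda>x. cross_det (S x)) \<longlongrightarrow> cross_det T) F"
  unfolding cross_det_def cross_pairing_def slice_cross_def sum_lessThan_3
  by (auto intro!: tendsto_intros assms)

lemma tensor_open_nonzero:
  fixes P :: "(nat \<Rightarrow> nat \<Rightarrow> nat \<Rightarrow> real) \<Rightarrow> real"
  assumes "\<And>S T. (\<And>i j k. i < n1 \<Longrightarrow> j < n2 \<Longrightarrow> k < n3 \<Longrightarrow> (\<lambda>N. S N i j k) \<longlonglongrightarrow> T i j k)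
      \<Longrightarrow> (\<lambda>N. P (S N)) \<longlonglongrightarrow> P T"
  shows "tensor_open n1 n2 n3 {T \<in> tensor_space n1 n2 n3. P T \<noteq> 0}"
  unfolding tensor_open_def
proof (intro conjI ballI)
  fix T assume "T \<in> {T \<in> tensor_space n1 n2 n3. P T \<noteq> 0}"
  then have "P T \<noteq> 0" by simp
  show "\<exists>e>0. \<forall>S\<in>tensor_space n1 n2 n3. (\<forall>i<n1. \<forall>j<n2. \<forall>k<n3. \<bar>S i j k - T i j k\<bar> < e) \<longrightarrow>
      S \<in> {T \<in> tensor_space n1 n2 n3. P T \<noteq> 0}"
  proof (rule ccontr)
    assume contra: "\<not> ?thesis"
    have "\<exists>S. (\<forall>i<n1. \<forall>j<n2. \<forall>k<n3. \<bar>S i j k - T i j k\<bar> < inverse (real (Suc N))) \<and> P S = 0"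
      for N
    proof -
      have "inverse (real (Suc N)) > 0" by simp
      with contra show ?thesis by blast
    qed
    then obtain S where S: "\<And>N. \<forall>i<n1. \<forall>j<n2. \<forall>k<n3. \<bar>S N i j k - T i j k\<bar> < inverse (real (Suc N))"
      and "\<And>N. P (S N) = 0"
      by metis
    have "(\<lambda>N. S N i j k) \<longlonglongrightarrow> T i j k" if "i < n1" "j < n2" "k < n3" for i j k
    proof (rule LIM_zero_cancel, rule Lim_null_comparison[OF _ LIMSEQ_inverse_real_of_nat])
      show "\<forall>\<^sub>F N in sequentially. norm (S N i j k - T i j k) \<le> inverse (real (Suc N))"
        using S that by (auto intro!: always_eventually less_imp_le)
    qed
    then have "(\<lambda>N. P (S N)) \<longlonglongrightarrow> P T"
      by (rule assms)
    with \<open>\<And>N. P (S N) = 0\<close> have "P T = 0"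
      by (simp add: LIMSEQ_const_iff)
    with \<open>P T \<noteq> 0\<close> show False ..
  qed
qed blast

lemma cross_det_perturb_nonzero:
  fixes T K :: "nat \<Rightarrow> nat \<Rightarrow> nat \<Rightarrow> real"
  assumes "cross_det K \<noteq> 0" and "0 < e"
  obtains s where "0 < s" "s < e" "cross_det (\<lambda>i j k. T i j k + s * K i j k) \<noteq> 0"
proof -
  txt \<open>\<open>Q(u) = cross_det (K + u T)\<close> is a nonzero polynomial since \<open>Q(0) \<noteq> 0\<close>, and
    \<open>cross_det (T + s K) = s\<^sup>6 Q(1/s)\<close> by homogeneity, so any large enough non-root
    \<open>u\<close> gives \<open>s = 1/u\<close>.\<close>
  define Q where "Q = cross_det (\<lambda>i j k. [:K i j k, T i j k:])"
  have "poly Q 0 \<noteq> 0"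
    using assms(1) by (simp add: Q_def poly_cross_det_linear)
  then have "finite {u. poly Q u = 0}"
    by (intro poly_roots_finite) auto
  then have "infinite ({1 / e<..} - {u. poly Q u = 0})"
    by (intro Diff_infinite_finite infinite_Ioi)
  then obtain u where "u \<in> {1 / e<..} - {u. poly Q u = 0}"
    using infinite_imp_nonempty by blast
  then have "1 / e < u" "poly Q u \<noteq> 0"
    by auto
  have "0 < u"
    using \<open>1 / e < u\<close> assms(2) by (smt (verit) divide_pos_pos)
  define s where "s = 1 / u"
  have "(\<lambda>i j k. T i j k + s * K i j k) = (\<lambda>i j k. s * (K i j k + u * T i j k))"
    using \<open>0 < u\<close> by (simp add: fun_eq_iff s_def field_simps)
  then have "cross_det (\<lambda>i j k. T i j k + s * K i j k) = s ^ 6 * poly Q u"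
    by (simp only: cross_det_scale Q_def poly_cross_det_linear)
  moreover have "0 < s" "s < e"
    using \<open>0 < u\<close> \<open>1 / e < u\<close> assms(2) by (auto simp: s_def field_simps)
  ultimately show ?thesis
    using \<open>poly Q u \<noteq> 0\<close> that by simp
qed

definition corner_tensor :: "nat \<Rightarrow> nat \<Rightarrow> nat \<Rightarrow> real" where
  "corner_tensor i j k = (if (i, j, k) \<in> {(0, 0, 0), (0, 1, 1), (1, 0, 1), (1, 1, 2)} then 1 else 0)"

lemma cross_det_corner_tensor: "cross_det corner_tensor = 1"
  by (simp add: cross_det_def cross_pairing_def slice_cross_def sum_lessThan_3 corner_tensor_def)

lemma corner_tensor_in_tensor_space: "2 \<le> m \<Longrightarrow> 3 \<le> n \<Longrightarrow> corner_tensor \<in> tensor_space 2 m n"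
  by (auto simp: tensor_space_def corner_tensor_def)

lemma tensor_open_meets_cross_det_nonzero:
  assumes "2 \<le> m" "3 \<le> n" and "tensor_open 2 m n U" "U \<noteq> {}"
  shows "\<exists>S\<in>U. cross_det S \<noteq> 0"
proof -
  obtain T where "T \<in> U" using assms(4) by blast
  then obtain e where "e > 0" and e: "\<And>S. S \<in> tensor_space 2 m n \<Longrightarrow>
      \<forall>i<2. \<forall>j<m. \<forall>k<n. \<bar>S i j k - T i j k\<bar> < e \<Longrightarrow> S \<in> U"
    using assms(3) unfolding tensor_open_def by blast
  obtain s where "0 < s" "s < e" and nonzero: "cross_det (\<lambda>i j k. T i j k + s * corner_tensor i j k) \<noteq> 0"
    using cross_det_perturb_nonzero[of corner_tensor e T] cross_det_corner_tensor \<open>e > 0\<close> by auto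
  have "T \<in> tensor_space 2 m n"
    using \<open>T \<in> U\<close> assms(3) unfolding tensor_open_def by blast
  then have "(\<lambda>i j k. T i j k + s * corner_tensor i j k) \<in> tensor_space 2 m n"
    using corner_tensor_in_tensor_space[OF assms(1,2)] by (simp add: tensor_space_def)
  moreover have "\<bar>s * corner_tensor i j k\<bar> < e" for i j k
    using \<open>0 < s\<close> \<open>s < e\<close> \<open>e > 0\<close> by (simp add: corner_tensor_def)
  ultimately have "(\<lambda>i j k. T i j k + s * corner_tensor i j k) \<in> U"
    by (intro e) auto
  with nonzero show ?thesis by blast
qed

lemma typical_subrank_iff_generic:
  assumes "tensor_open n1 n2 n3 G" and "G \<noteq> {}"
    and "\<And>T. T \<in> G \<Longrightarrow> subrank n1 n2 n3 T = r0"
    and "\<And>U. tensor_open n1 n2 n3 U \<Longrightarrow> U \<noteq> {} \<Longrightarrow> U \<inter> G \<noteq> {}"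
  shows "typical_subrank n1 n2 n3 r \<longleftrightarrow> r = r0"
proof
  assume "typical_subrank n1 n2 n3 r"
  then obtain U where "U \<noteq> {}" "tensor_open n1 n2 n3 U"
      and U: "U \<subseteq> {T \<in> tensor_space n1 n2 n3. subrank n1 n2 n3 T = r}"
    unfolding typical_subrank_def by blast
  with assms(4) obtain T where "T \<in> U" "T \<in> G" by blast
  with U assms(3) show "r = r0" by blast
next
  assume "r = r0"
  moreover have "G \<subseteq> tensor_space n1 n2 n3"
    using assms(1) unfolding tensor_open_def by blast
  ultimately show "typical_subrank n1 n2 n3 r"
    unfolding typical_subrank_def using assms(1-3) by (intro exI[of _ G]) auto
qed

lemma typical_subrank_2_m_n:
  assumes "2 \<le> m" "3 \<le> n"
  shows "typical_subrank 2 m n r \<longleftrightarrow> r = 2"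
proof (rule typical_subrank_iff_generic)
  show "tensor_open 2 m n {T \<in> tensor_space 2 m n. cross_det T \<noteq> 0}"
    using assms by (intro tensor_open_nonzero cross_det_tendsto) auto
  show "{T \<in> tensor_space 2 m n. cross_det T \<noteq> 0} \<noteq> {}"
    using corner_tensor_in_tensor_space[OF assms] cross_det_corner_tensor by auto
  show "subrank 2 m n T = 2" if "T \<in> {T \<in> tensor_space 2 m n. cross_det T \<noteq> 0}" for T
    using that assms by (simp add: subrank_eq_2 restricts_to_unit_2_if_cross_det_nonzero)
  show "U \<inter> {T \<in> tensor_space 2 m n. cross_det T \<noteq> 0} \<noteq> {}"
    if "tensor_open 2 m n U" "U \<noteq> {}" for U
    using that tensor_open_meets_cross_det_nonzero[OF assms that] unfolding tensor_open_def by blast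
qed

theorem theorem4p4:
  fixes m n :: nat
  assumes "m \<ge> 2" and "n \<ge> 2" and "(m, n) \<noteq> (2, 2)"
  shows "\<forall>r. typical_subrank 2 m n r \<longleftrightarrow> r = 2"
proof
  fix r
  show "typical_subrank 2 m n r \<longleftrightarrow> r = 2"
  proof (cases "n \<ge> 3")
    case True
    with assms(1) show ?thesis by (rule typical_subrank_2_m_n)
  next
    case False
    with assms have "m \<ge> 3" by auto
    with assms(2) have "typical_subrank 2 n m r \<longleftrightarrow> r = 2" by (rule typical_subrank_2_m_n)
    then show ?thesis by (simp add: typical_subrank_swap23_iff)
  qed
qed

end
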